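(* Let $G$ be a connected graph and let $S \subseteq V(G)$ with $|S| = k \ge 1$. Then there exists a connected induced subgraph $H$ of $G$ with $S \subseteq V(H)$ and a partition $V(H) = A \cup B$ into two disjoint sets such that: (1) every connected component of $G[A]$ and every connected component of $G[B]$ has at most $\lceil k/2 \rceil$ vertices; (2) the spanning subgraph of $H$ with vertex set $V(H)$ whose edges are exactly the edges of $H$ with one endpoint in $A$ and the other in $B$ is connected; (3) every vertex $v \in V(G)\setminus V(H)$ that is adjacent in $G$ to at least one vertex of $V(H)$ has a neighbor $a\in A$ and a neighbor $b \in B$.
   Context: All graphs are finite and simple. $G[X]$ denotes the subgraph of $G$ induced by the vertex set $X$. *)

theory Defs
  imports Complex_Main
begin

definition simple_graph :: "'a set \<Rightarrow> ('a \<Rightarrow> 'a \<Rightarrow> bool) \<Rightarrow> bool" where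
  "simple_graph V E \<longleftrightarrow> finite V \<and> (\<forall>x y. E x y \<longrightarrow> x \<in> V \<and> y \<in> V)
     \<and> (\<forall>x y. E x y \<longrightarrow> E y x) \<and> (\<forall>x. \<not> E x x)"

definition connected_on :: "'a set \<Rightarrow> ('a \<Rightarrow> 'a \<Rightarrow> bool) \<Rightarrow> bool" where
  "connected_on X E \<longleftrightarrow> X \<noteq> {} \<and>
     (\<forall>x\<in>X. \<forall>y\<in>X. (\<lambda>a b. a \<in> X \<and> b \<in> X \<and> E a b)\<^sup>*\<^sup>* x y)"

definition component_of :: "'a set \<Rightarrow> ('a \<Rightarrow> 'a \<Rightarrow> bool) \<Rightarrow> 'a set \<Rightarrow> bool" where
  "component_of A E C \<longleftrightarrow> C \<subseteq> A \<and> connected_on C E \<and>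
     (\<forall>D. C \<subseteq> D \<and> D \<subseteq> A \<and> connected_on D E \<longrightarrow> D = C)"

end

theory Submission
  imports Defs
begin

text \<open>
  Take an inclusion-minimal connected set \<open>X \<supseteq> S\<close>. Every vertex of \<open>X - S\<close> is a cut vertex of
  \<open>X\<close>, so splitting at such a vertex \<open>v\<close> and recursing on the two pieces (with \<open>v\<close> added to both
  terminal sets) gives a 2-colouring of \<open>X\<close> whose monochromatic connected sets have at most
  \<open>\<lceil>k/2\<rceil>\<close> vertices; the recursion keeps the stronger bound \<open>\<lfloor>k/2\<rfloor>\<close> for the part containing a
  chosen root, which is what makes the two halves glue at \<open>v\<close>. Among all colourings whose cross
  edges contain the current ones, one with the most cross edges has connected cross edges:
  otherwise swapping colours on a component of the cross edges adds one. Finally, while some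
  outside neighbour of the set sees only one colour class, it joins the other class as a
  singleton component, which preserves all three properties.
\<close>

section \<open>Connectivity inside a vertex set\<close>

abbreviation reach_in :: "'a set \<Rightarrow> ('a \<Rightarrow> 'a \<Rightarrow> bool) \<Rightarrow> 'a \<Rightarrow> 'a \<Rightarrow> bool" where
  "reach_in X R \<equiv> (\<lambda>a b. a \<in> X \<and> b \<in> X \<and> R a b)\<^sup>*\<^sup>*"

lemma reach_in_closed:
  assumes "reach_in X R x y" "x \<in> P" "\<And>a b. a \<in> P \<Longrightarrow> b \<in> X \<Longrightarrow> R a b \<Longrightarrow> b \<in> P"
  shows "y \<in> P \<and> reach_in P R x y"
  using assms by (induction rule: rtranclp_induct) (auto intro: rtranclp.rtrancl_into_rtrancl)

lemma reach_in_exit: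
  assumes "reach_in X R x g" "x \<in> P" "\<And>a b. a \<in> P \<Longrightarrow> b \<in> X \<Longrightarrow> R a b \<Longrightarrow> b \<in> P \<or> b = g"
  shows "reach_in (insert g P) R x g"
proof -
  have "(y \<in> P \<and> reach_in (insert g P) R x y) \<or> reach_in (insert g P) R x g"
    if "reach_in X R x y" for y
    using that
  proof (induction rule: rtranclp_induct)
    case (step y z)
    then consider "y \<in> P" "reach_in (insert g P) R x y" | "reach_in (insert g P) R x g"
      by auto
    then show ?case
    proof cases
      case 1
      with step assms(3) have "z \<in> P \<or> z = g" by auto
      with 1 step show ?thesis by (auto intro: rtranclp.rtrancl_into_rtrancl)
    qed auto
  qed (use assms(2) in auto)
  then show ?thesis using assms(1) by blast
qed

lemma reach_in_mono: "reach_in X R x y \<Longrightarrow> X \<subseteq> Y \<Longrightarrow> reach_in Y R x y"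
  by (induction rule: rtranclp_induct) (auto intro: rtranclp.rtrancl_into_rtrancl)

lemma reach_in_sym:
  assumes "reach_in X R x y" "\<And>a b. R a b \<Longrightarrow> R b a"
  shows "reach_in X R y x"
  using assms by (induction rule: rtranclp_induct) (auto intro: converse_rtranclp_into_rtranclp)

lemma connected_on_reach: "connected_on X R \<Longrightarrow> x \<in> X \<Longrightarrow> y \<in> X \<Longrightarrow> reach_in X R x y"
  unfolding connected_on_def by blast

lemma connected_onI_hub:
  assumes "h \<in> X" "\<And>x. x \<in> X \<Longrightarrow> reach_in X R h x" "\<And>a b. R a b \<Longrightarrow> R b a"
  shows "connected_on X R"
  unfolding connected_on_def
proof (intro conjI ballI)
  fix x y assume "x \<in> X" "y \<in> X"
  then show "reach_in X R x y"
    using reach_in_sym[OF assms(2) assms(3)] assms(2) by (blast intro: rtranclp_trans)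
qed (use assms(1) in auto)

lemma connected_on_singleton: "connected_on {x} R"
  unfolding connected_on_def by auto

lemma connected_on_mono_rel:
  assumes "connected_on X R" "R \<le> R'"
  shows "connected_on X R'"
proof -
  have "reach_in X R x y \<Longrightarrow> reach_in X R' x y" for x y
    by (induction rule: rtranclp_induct) (auto intro: rtranclp.rtrancl_into_rtrancl assms(2)[THEN predicate2D])
  with assms(1) show ?thesis unfolding connected_on_def by blast
qed

lemma connected_on_Un:
  assumes "connected_on X R" "connected_on Y R" "h \<in> X" "h \<in> Y" "\<And>a b. R a b \<Longrightarrow> R b a"
  shows "connected_on (X \<union> Y) R"
proof (rule connected_onI_hub[of h])
  fix x assume "x \<in> X \<union> Y"
  then show "reach_in (X \<union> Y) R h x"
    using reach_in_mono[OF connected_on_reach[OF assms(1) assms(3)]]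
      reach_in_mono[OF connected_on_reach[OF assms(2) assms(4)]] by blast
qed (use assms in auto)

lemma connected_on_insert:
  assumes "connected_on X R" "u \<in> X" "R u v" "\<And>a b. R a b \<Longrightarrow> R b a"
  shows "connected_on (insert v X) R"
  using connected_on_Un[OF assms(1) _ assms(2) _ assms(4), of "{u, v}"] assms(2-4)
    connected_onI_hub[of u "{u, v}" R]
  by (auto simp: insert_absorb)

lemma connected_on_reach_set:
  assumes "r \<in> X" "\<And>a b. R a b \<Longrightarrow> R b a"
  shows "connected_on {y \<in> X. reach_in X R r y} R"
proof (rule connected_onI_hub[of r])
  fix x assume "x \<in> {y \<in> X. reach_in X R r y}"
  then show "reach_in {y \<in> X. reach_in X R r y} R r x"
    using reach_in_closed[of X R r x "{y \<in> X. reach_in X R r y}"] assms(1)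
    by (auto intro: rtranclp.rtrancl_into_rtrancl)
qed (use assms in auto)

lemma connected_on_insert_exit:
  assumes "connected_on C R" "v \<in> C" "P \<subseteq> C"
    "\<And>a b. a \<in> P \<Longrightarrow> b \<in> C \<Longrightarrow> R a b \<Longrightarrow> b \<in> P \<or> b = v" "\<And>a b. R a b \<Longrightarrow> R b a"
  shows "connected_on (insert v P) R"
proof (rule connected_onI_hub[of v])
  fix x assume x: "x \<in> insert v P"
  show "reach_in (insert v P) R v x"
  proof (cases "x \<in> P")
    case True
    with assms(3) have "reach_in C R x v" by (intro connected_on_reach[OF assms(1) _ assms(2)]) blast
    then have "reach_in (insert v P) R x v" by (rule reach_in_exit[OF _ True assms(4)])
    then show ?thesis by (rule reach_in_sym[OF _ assms(5)])
  qed (use x in auto)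
qed (auto intro: assms(5))

lemma connected_on_Int_cut_side:
  assumes "connected_on C R" "v \<in> C" "C \<subseteq> X1 \<union> X2" "X1 \<inter> X2 = {v}"
    "\<And>a b. a \<in> X1 - {v} \<Longrightarrow> b \<in> X2 - {v} \<Longrightarrow> \<not> R a b" "\<And>a b. R a b \<Longrightarrow> R b a"
  shows "connected_on (C \<inter> X1) R"
proof -
  have "connected_on (insert v (C \<inter> X1 - {v})) R"
    by (rule connected_on_insert_exit[OF assms(1,2) _ _ assms(6)]) (use assms(3-5) in blast)+
  moreover have "insert v (C \<inter> X1 - {v}) = C \<inter> X1" using assms(2,4) by auto
  ultimately show ?thesis by simp
qed

lemma card_Int_cut_sides:
  assumes "finite C" "C \<subseteq> X1 \<union> X2" "X1 \<inter> X2 = {v}" "v \<in> C"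
  shows "card (C \<inter> X1) + card (C \<inter> X2) = card C + 1"
proof -
  have "C \<inter> X1 \<union> C \<inter> X2 = C" "(C \<inter> X1) \<inter> (C \<inter> X2) = {v}" using assms(2-4) by auto
  then show ?thesis using card_Un_Int[of "C \<inter> X1" "C \<inter> X2"] assms(1) by simp
qed

lemma connected_on_separated:
  assumes "connected_on C R" "C \<subseteq> K \<union> L"
    "\<And>a b. a \<in> C \<inter> K \<Longrightarrow> b \<in> C \<inter> L \<Longrightarrow> \<not> R a b" "\<And>a b. R a b \<Longrightarrow> R b a"
  shows "C \<subseteq> K \<or> C \<subseteq> L"
proof -
  obtain c where c: "c \<in> C" using assms(1) unfolding connected_on_def by auto
  have "C \<subseteq> K" if "c \<in> K"
    using reach_in_closed[OF connected_on_reach[OF assms(1) c], of _ "C \<inter> K"] that c assms(2,3)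
    by blast
  moreover have "C \<subseteq> L" if "c \<in> L"
    using reach_in_closed[OF connected_on_reach[OF assms(1) c], of _ "C \<inter> L"] that c assms(2-4)
    by blast
  ultimately show ?thesis using c assms(2) by blast
qed

lemma connected_on_edge_leaving:
  assumes "connected_on X R" "D \<subseteq> X" "x \<in> D" "y \<in> X - D"
  obtains a b where "a \<in> D" "b \<in> X - D" "R a b"
proof -
  have reach: "reach_in X R x y" using connected_on_reach[OF assms(1)] assms(2-4) by blast
  have "\<exists>a b. a \<in> D \<and> b \<in> X - D \<and> R a b"
  proof (rule ccontr)
    assume "\<not> ?thesis"
    then have "y \<in> D" using reach_in_closed[OF reach assms(3)] by blast
    with assms(4) show False by simp
  qed
  with that show thesis by blast
qed

section \<open>Connected cross edges\<close>

definition cross_edges :: "('a \<Rightarrow> 'a \<Rightarrow> bool) \<Rightarrow> 'a set \<Rightarrow> 'a set \<Rightarrow> 'a \<Rightarrow> 'a \<Rightarrow> bool" where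
  "cross_edges E A B = (\<lambda>a b. E a b \<and> (a \<in> A \<and> b \<in> B \<or> a \<in> B \<and> b \<in> A))"

lemma cross_edges_sym: "(\<And>a b. E a b \<Longrightarrow> E b a) \<Longrightarrow> cross_edges E A B a b \<Longrightarrow> cross_edges E A B b a"
  unfolding cross_edges_def by auto

lemma cross_edges_swap: "cross_edges E B A = cross_edges E A B"
  unfolding cross_edges_def by (intro ext) auto

text \<open>If the cross edges do not connect \<open>X\<close>, swapping the two colours on one of their components
  keeps every cross edge and turns an edge leaving that component into a new one.\<close>

lemma cross_edges_increase:
  assumes conn: "connected_on X E" and part: "A \<union> B = X" "A \<inter> B = {}"
    and disconn: "\<not> connected_on X (cross_edges E A B)" and sym: "\<And>a b. E a b \<Longrightarrow> E b a"
  obtains A' B' a b where "A' \<union> B' = X" "A' \<inter> B' = {}" "cross_edges E A B \<le> cross_edges E A' B'"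
    "cross_edges E A' B' a b" "\<not> cross_edges E A B a b"
proof -
  obtain x0 where x0: "x0 \<in> X" using conn unfolding connected_on_def by blast
  define D where "D = {y \<in> X. reach_in X (cross_edges E A B) x0 y}"
  have DX: "D \<subseteq> X" and x0D: "x0 \<in> D" unfolding D_def using x0 by simp_all
  have D_step: "d \<in> D" if "c \<in> D" "d \<in> X" "cross_edges E A B c d" for c d
    using that rtranclp.rtrancl_into_rtrancl[of _ x0 c d] unfolding D_def by simp
  have D_closed: "c \<in> D \<longleftrightarrow> d \<in> D" if "cross_edges E A B c d" for c d
  proof -
    have "c \<in> X" "d \<in> X" using that part unfolding cross_edges_def by auto
    then show ?thesis using D_step[of c d] D_step[of d c] cross_edges_sym[of E A B, OF sym that] that
      by blast
  qed
  have "D \<noteq> X"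
  proof
    assume "D = X"
    have "connected_on D (cross_edges E A B)" unfolding D_def
      by (rule connected_on_reach_set[OF x0]) (rule cross_edges_sym[OF sym])
    with \<open>D = X\<close> disconn show False by simp
  qed
  then obtain y where "y \<in> X - D" using DX by auto
  then obtain a b where ab: "a \<in> D" "b \<in> X - D" "E a b"
    by (rule connected_on_edge_leaving[OF conn DX x0D])
  define A' where "A' = (A - D) \<union> (B \<inter> D)"
  define B' where "B' = (B - D) \<union> (A \<inter> D)"
  have part': "A' \<union> B' = X" "A' \<inter> B' = {}" using part DX unfolding A'_def B'_def by auto
  have le: "cross_edges E A B \<le> cross_edges E A' B'"
  proof (intro predicate2I)
    fix c d assume cd: "cross_edges E A B c d"
    with D_closed[OF cd] show "cross_edges E A' B' c d"
      unfolding cross_edges_def A'_def B'_def by auto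
  qed
  have old: "\<not> cross_edges E A B a b" using D_closed ab by blast
  then have new: "cross_edges E A' B' a b" using ab part DX unfolding cross_edges_def A'_def B'_def by auto
  show thesis by (rule that[OF part' le new old])
qed

lemma exists_recolouring_cross_connected:
  assumes fin: "finite X" and conn: "connected_on X E" and part: "A \<union> B = X" "A \<inter> B = {}"
    and sym: "\<And>a b. E a b \<Longrightarrow> E b a"
  obtains A' B' where "A' \<union> B' = X" "A' \<inter> B' = {}" "cross_edges E A B \<le> cross_edges E A' B'"
    "connected_on X (cross_edges E A' B')"
proof -
  define Q where "Q = (\<lambda>(A', B'). A' \<union> B' = X \<and> A' \<inter> B' = {} \<and> cross_edges E A B \<le> cross_edges E A' B')"
  define count where "count = (\<lambda>(A', B'). card {(a, b). cross_edges E A' B' a b})"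
  have count_set: "{(a, b). cross_edges E A' B' a b} \<subseteq> X \<times> X" if "A' \<union> B' = X" for A' B'
    using that unfolding cross_edges_def by auto
  have "Q (A, B)" unfolding Q_def using part by auto
  moreover have "count M < card (X \<times> X) + 1" if "Q M" for M
  proof -
    obtain A' B' where M: "M = (A', B')" by (cases M)
    with that have "A' \<union> B' = X" unfolding Q_def by simp
    then have "count M \<le> card (X \<times> X)"
      using card_mono[OF finite_cartesian_product[OF fin fin] count_set] unfolding M count_def by simp
    then show ?thesis by simp
  qed
  ultimately obtain A' B' where QM: "Q (A', B')" and max: "\<And>M. Q M \<Longrightarrow> count M \<le> count (A', B')"
    using ex_has_greatest_nat[of Q "(A, B)" count "card (X \<times> X) + 1"] by force
  have part': "A' \<union> B' = X" "A' \<inter> B' = {}" using QM unfolding Q_def by auto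
  have "connected_on X (cross_edges E A' B')"
  proof (rule ccontr)
    assume "\<not> connected_on X (cross_edges E A' B')"
    then obtain A'' B'' a b where new: "A'' \<union> B'' = X" "A'' \<inter> B'' = {}"
      "cross_edges E A' B' \<le> cross_edges E A'' B''" "cross_edges E A'' B'' a b" "\<not> cross_edges E A' B' a b"
      by (rule cross_edges_increase[OF conn part' _ sym])
    then have "Q (A'', B'')" using QM unfolding Q_def by auto
    have "{(a, b). cross_edges E A' B' a b} \<subset> {(a, b). cross_edges E A'' B'' a b}"
      using new(3-5) by (auto dest: predicate2D)
    moreover have "finite {(a, b). cross_edges E A'' B'' a b}"
      using finite_subset[OF count_set[OF new(1)]] fin by blast
    ultimately have "count (A', B') < count (A'', B'')"
      unfolding count_def by (simp add: psubset_card_mono)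
    with max[OF \<open>Q (A'', B'')\<close>] show False by simp
  qed
  with QM that show thesis unfolding Q_def by auto
qed

lemma monochromatic_of_cross_edges_le:
  assumes "A' \<inter> B' = {}" "cross_edges E A B \<le> cross_edges E A' B'"
    and "connected_on C E" "C \<subseteq> A' \<or> C \<subseteq> B'" "C \<subseteq> A \<union> B" "\<And>a b. E a b \<Longrightarrow> E b a"
  shows "C \<subseteq> A \<or> C \<subseteq> B"
proof (rule connected_on_separated[OF assms(3,5) _ assms(6)])
  fix a b assume "a \<in> C \<inter> A" "b \<in> C \<inter> B"
  then have "\<not> cross_edges E A' B' a b" using assms(1,4) unfolding cross_edges_def by auto
  then show "\<not> E a b" using assms(2) \<open>a \<in> C \<inter> A\<close> \<open>b \<in> C \<inter> B\<close> unfolding cross_edges_def by auto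
qed

section \<open>Absorbing one-sided neighbours\<close>

definition admissible ::
    "'a set \<Rightarrow> ('a \<Rightarrow> 'a \<Rightarrow> bool) \<Rightarrow> 'a set \<Rightarrow> nat \<Rightarrow> 'a set \<Rightarrow> 'a set \<Rightarrow> 'a set \<Rightarrow> bool" where
  "admissible V E S h X A B \<longleftrightarrow> X \<subseteq> V \<and> connected_on X E \<and> S \<subseteq> X \<and> A \<union> B = X \<and> A \<inter> B = {} \<and>
     (\<forall>C. connected_on C E \<and> (C \<subseteq> A \<or> C \<subseteq> B) \<longrightarrow> card C \<le> h) \<and>
     connected_on X (cross_edges E A B)"

lemma admissible_swap: "admissible V E S h X A B \<Longrightarrow> admissible V E S h X B A"
  unfolding admissible_def cross_edges_swap[of E B A] by (auto simp: Un_commute Int_commute)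

lemma admissible_insert:
  assumes sym: "\<And>a b. E a b \<Longrightarrow> E b a" and "1 \<le> h"
    and adm: "admissible V E S h X A B" and v: "v \<in> V" "v \<notin> X" and u: "u \<in> X" "E v u"
    and no_B: "\<not> (\<exists>b\<in>B. E v b)"
  shows "admissible V E S h (insert v X) A (insert v B)"
proof -
  from adm have X: "X \<subseteq> V" "connected_on X E" "S \<subseteq> X" "A \<union> B = X" "A \<inter> B = {}"
    "\<And>C. connected_on C E \<Longrightarrow> C \<subseteq> A \<or> C \<subseteq> B \<Longrightarrow> card C \<le> h" "connected_on X (cross_edges E A B)"
    unfolding admissible_def by auto
  have uA: "u \<in> A" and vA: "v \<notin> A" using u v no_B X(4) by auto
  have "connected_on (insert v X) E" by (rule connected_on_insert[OF X(2) u(1) sym[OF u(2)] sym])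
  moreover have "connected_on X (cross_edges E A (insert v B))"
    by (rule connected_on_mono_rel[OF X(7)]) (auto simp: cross_edges_def)
  then have "connected_on (insert v X) (cross_edges E A (insert v B))"
  proof (rule connected_on_insert[OF _ u(1)])
    show "cross_edges E A (insert v B) u v" using uA sym[OF u(2)] by (simp add: cross_edges_def)
  qed (rule cross_edges_sym[OF sym])
  moreover have "card C \<le> h" if C: "connected_on C E" "C \<subseteq> A \<or> C \<subseteq> insert v B" for C
  proof (cases "v \<in> C")
    case False
    then show ?thesis using X(6) C by blast
  next
    case True
    with C(2) vA have "C \<subseteq> {v} \<union> B" by auto
    moreover have "\<not> E a b" if "a \<in> C \<inter> {v}" "b \<in> C \<inter> B" for a b using that no_B by auto
    ultimately have "C \<subseteq> {v} \<or> C \<subseteq> B" by (rule connected_on_separated[of C E, OF C(1) _ _ sym])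
    moreover have "v \<notin> B" using v X(4) by auto
    ultimately have "C \<subseteq> {v}" using True by blast
    then have "card C \<le> 1" using card_mono[of "{v}" C] by simp
    then show ?thesis using \<open>1 \<le> h\<close> by simp
  qed
  moreover have "insert v X \<subseteq> V" "S \<subseteq> insert v X" "A \<union> insert v B = insert v X"
    "A \<inter> insert v B = {}" using X v vA by auto
  ultimately show ?thesis unfolding admissible_def by blast
qed

lemma exists_admissible_dominating:
  assumes "finite V" and sym: "\<And>a b. E a b \<Longrightarrow> E b a" and "1 \<le> h"
  shows "admissible V E S h X A B \<Longrightarrow> \<exists>X A B. admissible V E S h X A B \<and>
      (\<forall>v \<in> V - X. (\<exists>u \<in> X. E v u) \<longrightarrow> (\<exists>a \<in> A. E v a) \<and> (\<exists>b \<in> B. E v b))"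
proof (induction "card (V - X)" arbitrary: X A B rule: less_induct)
  case less
  show ?case
  proof (cases "\<forall>v \<in> V - X. (\<exists>u \<in> X. E v u) \<longrightarrow> (\<exists>a \<in> A. E v a) \<and> (\<exists>b \<in> B. E v b)")
    case True
    with less.prems show ?thesis by blast
  next
    case False
    then obtain v u where v: "v \<in> V" "v \<notin> X" and u: "u \<in> X" "E v u"
      and one_side: "\<not> (\<exists>a \<in> A. E v a) \<or> \<not> (\<exists>b \<in> B. E v b)" by blast
    have "\<exists>A' B'. admissible V E S h (insert v X) A' B'"
    proof (cases "\<exists>b \<in> B. E v b")
      case True
      with one_side have "\<not> (\<exists>a \<in> A. E v a)" by blast
      then show ?thesis
        using admissible_insert[of E h V S X B A, OF sym \<open>1 \<le> h\<close> admissible_swap[OF less.prems] v u]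
        by blast
    next
      case False
      then show ?thesis
        using admissible_insert[of E h V S X A B, OF sym \<open>1 \<le> h\<close> less.prems v u] by blast
    qed
    moreover have "card (V - insert v X) < card (V - X)"
      using v \<open>finite V\<close> by (metis Diff_insert Diff_iff card_Diff1_less finite_Diff)
    ultimately show ?thesis using less.hyps by blast
  qed
qed

section \<open>Colourings of minimal connected sets\<close>

definition min_connected :: "('a \<Rightarrow> 'a \<Rightarrow> bool) \<Rightarrow> 'a set \<Rightarrow> 'a set \<Rightarrow> bool" where
  "min_connected E S X \<longleftrightarrow> (\<forall>Y. Y \<subseteq> X \<longrightarrow> S \<subseteq> Y \<longrightarrow> connected_on Y E \<longrightarrow> Y = X)"

text \<open>The sharper bound \<open>\<lfloor>k/2\<rfloor>\<close> at the root \<open>r\<close> is what survives gluing two colourings at a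
  cut vertex: the glued component pays for the shared vertex once.\<close>

definition halving_colouring ::
    "('a \<Rightarrow> 'a \<Rightarrow> bool) \<Rightarrow> 'a set \<Rightarrow> nat \<Rightarrow> 'a \<Rightarrow> 'a set \<Rightarrow> 'a set \<Rightarrow> bool" where
  "halving_colouring E X k r A B \<longleftrightarrow> A \<union> B = X \<and> A \<inter> B = {} \<and>
     (\<forall>C. connected_on C E \<and> (C \<subseteq> A \<or> C \<subseteq> B) \<longrightarrow> card C \<le> (k + 1) div 2) \<and>
     (\<forall>C. connected_on C E \<and> (C \<subseteq> A \<or> C \<subseteq> B) \<and> r \<in> C \<longrightarrow> card C \<le> k div 2)"

lemma halving_colouring_with_vertex_in_fst:
  assumes "halving_colouring E X k r A B" "v \<in> X"
  obtains A' B' where "halving_colouring E X k r A' B'" "v \<in> A'"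
proof (cases "v \<in> A")
  case False
  with assms have "halving_colouring E X k r B A" "v \<in> B" unfolding halving_colouring_def by auto
  then show thesis by (rule that)
qed (use assms that in blast)

lemma halving_colouring_of_terminals:
  assumes "finite S" "r \<in> S" "2 \<le> card S"
  obtains A B where "halving_colouring E S (card S) r A B"
proof -
  have "card S div 2 - 1 \<le> card (S - {r})" using assms by simp
  then obtain A0 where A0: "A0 \<subseteq> S - {r}" "card A0 = card S div 2 - 1"
    by (rule obtain_subset_with_card_n)
  define A where "A = insert r A0"
  have AS: "A \<subseteq> S" and finA: "finite A" using A0 assms(1,2) finite_subset unfolding A_def by auto
  have cardA: "card A = card S div 2"
  proof -
    have "r \<notin> A0" "finite A0" using A0(1) finite_subset[OF A0(1)] assms(1) by auto
    then show ?thesis using A0(2) assms(3) unfolding A_def by simp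
  qed
  have cardB: "card (S - A) = (card S + 1) div 2"
    using card_Diff_subset[OF finA AS] cardA by simp
  have small_A: "card C \<le> card S div 2" if "C \<subseteq> A" for C
    using card_mono[OF finA that] cardA by simp
  have small_B: "card C \<le> (card S + 1) div 2" if "C \<subseteq> S - A" for C
    using card_mono[OF _ that] assms(1) cardB by simp
  have "halving_colouring E S (card S) r A (S - A)"
    unfolding halving_colouring_def
  proof (intro conjI allI impI)
    fix C assume "connected_on C E \<and> (C \<subseteq> A \<or> C \<subseteq> S - A)"
    then have "C \<subseteq> A \<or> C \<subseteq> S - A" by blast
    moreover have "card S div 2 \<le> (card S + 1) div 2" by simp
    ultimately show "card C \<le> (card S + 1) div 2" using small_A small_B le_trans by blast
  next
    fix C assume "connected_on C E \<and> (C \<subseteq> A \<or> C \<subseteq> S - A) \<and> r \<in> C"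
    then have "C \<subseteq> A" unfolding A_def by blast
    then show "card C \<le> card S div 2" by (rule small_A)
  qed (use AS in auto)
  then show thesis by (rule that)
qed

lemma min_connected_piece:
  assumes min: "min_connected E S (X1 \<union> X2)" and "S \<subseteq> X1 \<union> X2" "X1 \<inter> X2 = {v}"
    and conn2: "connected_on X2 E" and sym: "\<And>a b. E a b \<Longrightarrow> E b a"
  shows "min_connected E (insert v (S \<inter> X1)) X1"
  unfolding min_connected_def
proof (intro allI impI)
  fix Y assume Y: "Y \<subseteq> X1" "insert v (S \<inter> X1) \<subseteq> Y" "connected_on Y E"
  have "connected_on (Y \<union> X2) E" using connected_on_Un[OF Y(3) conn2 _ _ sym, of v] Y(2) assms(3) by auto
  moreover have "S \<subseteq> Y \<union> X2" "Y \<union> X2 \<subseteq> X1 \<union> X2" using Y assms(2) by auto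
  ultimately have "Y \<union> X2 = X1 \<union> X2" using min unfolding min_connected_def by blast
  then show "Y = X1" using Y assms(3) by blast
qed

text \<open>\<open>X2\<close> is \<open>v\<close> together with the component of \<open>X - {v}\<close> containing \<open>r\<close>; by minimality of \<open>X\<close>
  it cannot contain all of \<open>S\<close>.\<close>

lemma min_connected_cut:
  assumes min: "min_connected E S X" and conn: "connected_on X E" and "S \<subseteq> X"
    and v: "v \<in> X" "v \<notin> S" and r: "r \<in> S" and sym: "\<And>a b. E a b \<Longrightarrow> E b a"
  obtains X1 X2 where "X1 \<union> X2 = X" "X1 \<inter> X2 = {v}" "r \<in> X2" "S \<inter> X1 \<noteq> {}"
    "\<And>a b. a \<in> X1 - {v} \<Longrightarrow> b \<in> X2 - {v} \<Longrightarrow> \<not> E a b"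
    "connected_on X1 E" "connected_on X2 E"
proof -
  define R where "R = {y \<in> X - {v}. reach_in (X - {v}) E r y}"
  define X1 where "X1 = insert v (X - {v} - R)"
  define X2 where "X2 = insert v R"
  have X12: "X1 \<union> X2 = X" "X1 \<inter> X2 = {v}" and rX2: "r \<in> X2"
    using v r \<open>S \<subseteq> X\<close> unfolding X1_def X2_def R_def by auto
  have R_closed: "b \<in> R" if "a \<in> R" "b \<in> X - {v}" "E a b" for a b
    using that unfolding R_def by (auto intro: rtranclp.rtrancl_into_rtrancl)
  have no_edge: "\<not> E a b" and no_edge': "\<not> E b a" if "a \<in> X1 - {v}" "b \<in> X2 - {v}" for a b
    using that R_closed[of b a] sym[of a b] unfolding X1_def X2_def by auto
  have "S \<inter> X1 \<noteq> {}"
  proof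
    assume "S \<inter> X1 = {}"
    then have "S \<subseteq> R" using \<open>S \<subseteq> X\<close> v unfolding X1_def by auto
    moreover have "connected_on R E" unfolding R_def
      by (rule connected_on_reach_set[OF _ sym]) (use rX2 v r \<open>S \<subseteq> X\<close> in auto)
    moreover have "R \<subseteq> X" unfolding R_def by auto
    ultimately have "R = X" using min unfolding min_connected_def by blast
    then show False using v unfolding R_def by auto
  qed
  moreover have "connected_on X1 E"
  proof -
    have "connected_on (X \<inter> X1) E"
      by (rule connected_on_Int_cut_side[OF conn v(1) _ X12(2) no_edge sym]) (use X12 in blast)
    moreover have "X \<inter> X1 = X1" using X12 by blast
    ultimately show ?thesis by simp
  qed
  moreover have "connected_on X2 E"
  proof -
    have "X \<subseteq> X2 \<union> X1" "X2 \<inter> X1 = {v}" using X12 by blast+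
    then have "connected_on (X \<inter> X2) E" by (rule connected_on_Int_cut_side[OF conn v(1) _ _ no_edge' sym])
    moreover have "X \<inter> X2 = X2" using X12 by blast
    ultimately show ?thesis by simp
  qed
  ultimately show thesis using that[OF X12 rX2] no_edge by blast
qed

lemma halving_colouring_glue:
  assumes fin: "finite X1" "finite X2" and X12: "X1 \<inter> X2 = {v}"
    and no_edge: "\<And>a b. a \<in> X1 - {v} \<Longrightarrow> b \<in> X2 - {v} \<Longrightarrow> \<not> E a b"
    and r: "r \<in> X2 - {v}"
    and col1: "halving_colouring E X1 k1 v A1 B1" "v \<in> A1"
    and col2: "halving_colouring E X2 k2 r A2 B2" "v \<in> A2"
    and k: "k1 + k2 = k + 2"
    and sym: "\<And>a b. E a b \<Longrightarrow> E b a"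
  shows "halving_colouring E (X1 \<union> X2) k r (A1 \<union> A2) (B1 \<union> B2)"
proof -
  from col1 have p1: "A1 \<union> B1 = X1" "A1 \<inter> B1 = {}"
    and b1: "\<And>C. connected_on C E \<Longrightarrow> C \<subseteq> A1 \<or> C \<subseteq> B1 \<Longrightarrow> card C \<le> (k1 + 1) div 2"
    and r1: "\<And>C. connected_on C E \<Longrightarrow> C \<subseteq> A1 \<or> C \<subseteq> B1 \<Longrightarrow> v \<in> C \<Longrightarrow> card C \<le> k1 div 2"
    unfolding halving_colouring_def by auto
  from col2 have p2: "A2 \<union> B2 = X2" "A2 \<inter> B2 = {}"
    and b2: "\<And>C. connected_on C E \<Longrightarrow> C \<subseteq> A2 \<or> C \<subseteq> B2 \<Longrightarrow> card C \<le> (k2 + 1) div 2"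
    and r2: "\<And>C. connected_on C E \<Longrightarrow> C \<subseteq> A2 \<or> C \<subseteq> B2 \<Longrightarrow> r \<in> C \<Longrightarrow> card C \<le> k2 div 2"
    unfolding halving_colouring_def by auto
  have "1 \<le> k1 div 2" "1 \<le> k2 div 2"
    using r1[OF connected_on_singleton] r2[OF connected_on_singleton] col1(2) p1 p2 r by auto
  with k have k: "k1 + k2 = k + 2" "2 \<le> k1" "2 \<le> k2" by auto
  define A where "A = A1 \<union> A2"
  define B where "B = B1 \<union> B2"
  have restrict: "A \<inter> X1 = A1" "B \<inter> X1 = B1" "A \<inter> X2 = A2" "B \<inter> X2 = B2"
    using X12 p1 p2 col1(2) col2(2) unfolding A_def B_def by auto
  have part: "A \<union> B = X1 \<union> X2" "A \<inter> B = {}"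
    using X12 p1 p2 col1(2) col2(2) unfolding A_def B_def by auto
  have bound: "card C \<le> (k + 1) div 2 \<and> (r \<in> C \<longrightarrow> card C \<le> k div 2)"
    if C: "connected_on C E" "C \<subseteq> A \<or> C \<subseteq> B" for C
  proof (cases "v \<in> C")
    case False
    have "C \<subseteq> (X1 - {v}) \<union> (X2 - {v})" using C(2) part False by auto
    then have "C \<subseteq> X1 - {v} \<or> C \<subseteq> X2 - {v}"
      by (rule connected_on_separated[of C E, OF C(1) _ _ sym]) (use no_edge in blast)
    then show ?thesis
    proof
      assume "C \<subseteq> X1 - {v}"
      then have "C \<subseteq> A1 \<or> C \<subseteq> B1" "r \<notin> C" using C(2) restrict r X12 by auto
      then show ?thesis using b1[OF C(1)] k by auto
    next
      assume "C \<subseteq> X2 - {v}"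
      then have "C \<subseteq> A2 \<or> C \<subseteq> B2" using C(2) restrict by auto
      then show ?thesis using b2[OF C(1)] r2[OF C(1)] k by auto
    qed
  next
    case True
    have CA: "C \<subseteq> A" using C(2) True part col1(2) unfolding A_def by auto
    have CX: "C \<subseteq> X1 \<union> X2" using CA part by blast
    have "connected_on (C \<inter> X1) E" by (rule connected_on_Int_cut_side[OF C(1) True CX X12 no_edge sym])
    moreover have "C \<inter> X1 \<subseteq> A1" using CA restrict by blast
    ultimately have c1: "card (C \<inter> X1) \<le> k1 div 2" using r1 True X12 by blast
    have no_edge': "\<not> E a b" if "a \<in> X2 - {v}" "b \<in> X1 - {v}" for a b
      using no_edge[OF that(2,1)] sym[of a b] by blast
    have "C \<subseteq> X2 \<union> X1" "X2 \<inter> X1 = {v}" using CX X12 by blast+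
    then have "connected_on (C \<inter> X2) E" by (rule connected_on_Int_cut_side[OF C(1) True _ _ no_edge' sym])
    then have c2: "card (C \<inter> X2) \<le> (k2 + 1) div 2" "r \<in> C \<longrightarrow> card (C \<inter> X2) \<le> k2 div 2"
      using b2 r2 CA restrict r by blast+
    have "finite C" using CX fin by (simp add: finite_subset)
    then have "card (C \<inter> X1) + card (C \<inter> X2) = card C + 1"
      by (rule card_Int_cut_sides[OF _ CX X12 True])
    with c1 c2 k show ?thesis by auto
  qed
  show ?thesis
    using part bound unfolding halving_colouring_def A_def B_def by blast
qed

lemma halving_colouring_exists:
  assumes sym: "\<And>a b. E a b \<Longrightarrow> E b a"
  shows "finite X \<Longrightarrow> connected_on X E \<Longrightarrow> S \<subseteq> X \<Longrightarrow> min_connected E S X \<Longrightarrow> r \<in> S \<Longrightarrow>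
    2 \<le> card S \<Longrightarrow> \<exists>A B. halving_colouring E X (card S) r A B"
proof (induction "card X" arbitrary: X S r rule: less_induct)
  case less
  note fin = less.prems(1) and conn = less.prems(2) and SX = less.prems(3)
    and min = less.prems(4) and r = less.prems(5) and two = less.prems(6)
  have finS: "finite S" using fin SX finite_subset by blast
  show ?case
  proof (cases "X \<subseteq> S")
    case True
    with SX have "X = S" by blast
    with halving_colouring_of_terminals[OF finS r two] show ?thesis by metis
  next
    case False
    then obtain v where v: "v \<in> X" "v \<notin> S" by blast
    obtain X1 X2 where X: "X1 \<union> X2 = X" "X1 \<inter> X2 = {v}" "r \<in> X2" "S \<inter> X1 \<noteq> {}"
      and no_edge: "\<And>a b. a \<in> X1 - {v} \<Longrightarrow> b \<in> X2 - {v} \<Longrightarrow> \<not> E a b"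
      and conn1: "connected_on X1 E" and conn2: "connected_on X2 E"
      using min_connected_cut[OF min conn SX v r sym] by blast
    have piece: "\<exists>A B. halving_colouring E Y (card (insert v (S \<inter> Y))) \<rho> A B \<and> v \<in> A"
      if Y: "Y \<subset> X" "v \<in> Y" "S \<inter> Y \<noteq> {}" "connected_on Y E" "min_connected E (insert v (S \<inter> Y)) Y"
        "\<rho> \<in> insert v (S \<inter> Y)" for Y \<rho>
    proof -
      obtain s where "s \<in> S \<inter> Y" using Y(3) by blast
      moreover have "s \<noteq> v" using \<open>s \<in> S \<inter> Y\<close> v(2) by blast
      ultimately have "{v, s} \<subseteq> insert v (S \<inter> Y)" "card {v, s} = 2" by auto
      then have "2 \<le> card (insert v (S \<inter> Y))" using card_mono finS by (metis finite_Int finite_insert)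
      then obtain A B where "halving_colouring E Y (card (insert v (S \<inter> Y))) \<rho> A B"
        using less.hyps[OF psubset_card_mono[OF fin Y(1)] _ Y(4) _ Y(5,6)] fin Y(1,2) finite_subset
        by blast
      then show ?thesis using halving_colouring_with_vertex_in_fst Y(2) by metis
    qed
    have vX: "v \<in> X1" "v \<in> X2" using X(2) by auto
    have "X1 \<subset> X" using X r v by auto
    moreover have "min_connected E (insert v (S \<inter> X1)) X1"
      using min SX X(1) by (intro min_connected_piece[OF _ _ X(2) conn2 sym]) auto
    ultimately obtain A1 B1 where col1: "halving_colouring E X1 (card (insert v (S \<inter> X1))) v A1 B1" "v \<in> A1"
      using piece[OF _ vX(1) X(4) conn1] by blast
    have "X2 \<subset> X" using X v by auto
    moreover have "min_connected E (insert v (S \<inter> X2)) X2"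
      using min SX X(1,2) by (intro min_connected_piece[OF _ _ _ conn1 sym]) (auto simp: Un_commute)
    moreover have "S \<inter> X2 \<noteq> {}" "r \<in> insert v (S \<inter> X2)" using X(3) r by auto
    ultimately obtain A2 B2 where col2: "halving_colouring E X2 (card (insert v (S \<inter> X2))) r A2 B2" "v \<in> A2"
      using piece[OF _ vX(2) _ conn2] by blast
    have "card (insert v S \<inter> X1) + card (insert v S \<inter> X2) = card (insert v S) + 1"
      by (rule card_Int_cut_sides) (use finS SX X(1,2) in auto)
    then have "card (insert v (S \<inter> X1)) + card (insert v (S \<inter> X2)) = card S + 2"
      using vX v(2) finS by auto
    moreover have "r \<in> X2 - {v}" using X(3) r v by blast
    ultimately have "halving_colouring E (X1 \<union> X2) (card S) r (A1 \<union> A2) (B1 \<union> B2)"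
      using halving_colouring_glue[OF _ _ X(2) no_edge _ col1 col2 _ sym] fin X(1) by blast
    with X(1) show ?thesis by blast
  qed
qed

lemma exists_min_connected:
  assumes "finite V" "connected_on V E" "S \<subseteq> V"
  obtains X where "X \<subseteq> V" "S \<subseteq> X" "connected_on X E" "min_connected E S X"
proof -
  define P where "P = (\<lambda>X. X \<subseteq> V \<and> S \<subseteq> X \<and> connected_on X E)"
  have "P V" unfolding P_def using assms by auto
  then obtain X where PX: "P X" and least: "\<And>Y. P Y \<Longrightarrow> card X \<le> card Y"
    using ex_has_least_nat[of P V card] by blast
  have "min_connected E S X" unfolding min_connected_def
  proof (intro allI impI)
    fix Y assume Y: "Y \<subseteq> X" "S \<subseteq> Y" "connected_on Y E"
    have "finite X" using PX assms(1) finite_subset unfolding P_def by blast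
    moreover have "card X \<le> card Y" using least PX Y unfolding P_def by auto
    ultimately show "Y = X" using Y(1) by (simp add: card_seteq)
  qed
  with PX that show thesis unfolding P_def by blast
qed

lemma exists_admissible:
  assumes "simple_graph V E" "connected_on V E" "S \<subseteq> V" "card S \<ge> 1"
  shows "\<exists>X A B. admissible V E S ((card S + 1) div 2) X A B"
proof (cases "card S = 1")
  case True
  then obtain s where S: "S = {s}" by (rule card_1_singletonE)
  have "card C \<le> 1" if "C \<subseteq> {s} \<or> C \<subseteq> {}" for C
    using that card_mono[of "{s}" C] by auto
  then have "admissible V E S ((card S + 1) div 2) {s} {s} {}"
    using assms(3) unfolding admissible_def S by (simp add: connected_on_singleton)
  then show ?thesis by blast
next
  case False
  have fin: "finite V" and sym: "\<And>a b. E a b \<Longrightarrow> E b a"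
    using assms(1) unfolding simple_graph_def by auto
  obtain X where X: "X \<subseteq> V" "S \<subseteq> X" "connected_on X E" "min_connected E S X"
    by (rule exists_min_connected[OF fin assms(2,3)])
  have finX: "finite X" using X(1) fin finite_subset by blast
  have "S \<noteq> {}" using assms(4) by auto
  then obtain r where r: "r \<in> S" by blast
  have "2 \<le> card S" using False assms(4) by simp
  then obtain A B where col: "halving_colouring E X (card S) r A B"
    using halving_colouring_exists[OF sym finX X(3,2,4) r] by blast
  then have part: "A \<union> B = X" "A \<inter> B = {}"
    and small: "\<And>C. connected_on C E \<Longrightarrow> C \<subseteq> A \<or> C \<subseteq> B \<Longrightarrow> card C \<le> (card S + 1) div 2"
    unfolding halving_colouring_def by auto
  obtain A' B' where A'B': "A' \<union> B' = X" "A' \<inter> B' = {}" "cross_edges E A B \<le> cross_edges E A' B'"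
    "connected_on X (cross_edges E A' B')"
    by (rule exists_recolouring_cross_connected[OF finX X(3) part sym])
  have "card C \<le> (card S + 1) div 2" if "connected_on C E" "C \<subseteq> A' \<or> C \<subseteq> B'" for C
  proof (rule small[OF that(1)])
    have "C \<subseteq> A \<union> B" using that(2) A'B'(1) part(1) by blast
    then show "C \<subseteq> A \<or> C \<subseteq> B" by (rule monochromatic_of_cross_edges_le[OF A'B'(2,3) that _ sym])
  qed
  with X A'B'(1,2,4) have "admissible V E S ((card S + 1) div 2) X A' B'"
    unfolding admissible_def by blast
  then show ?thesis by blast
qed

lemma nat_ceiling_half: "nat \<lceil>real k / 2\<rceil> = (k + 1) div 2"
proof -
  have "\<lceil>real k / 2\<rceil> = int ((k + 1) div 2)"
    by (rule ceiling_unique) (cases "even k"; auto elim!: evenE oddE simp: field_simps)+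
  then show ?thesis by simp
qed

theorem lemma2:
  fixes V :: "'a set" and E :: "'a \<Rightarrow> 'a \<Rightarrow> bool" and S :: "'a set" and k :: nat
  assumes "simple_graph V E" and "connected_on V E"
    and "S \<subseteq> V" and "card S = k" and "k \<ge> 1"
  shows "\<exists>X A B. X \<subseteq> V \<and> connected_on X E \<and> S \<subseteq> X \<and>
           A \<union> B = X \<and> A \<inter> B = {} \<and>
           (\<forall>C. component_of A E C \<longrightarrow> card C \<le> nat \<lceil>real k / 2\<rceil>) \<and>
           (\<forall>C. component_of B E C \<longrightarrow> card C \<le> nat \<lceil>real k / 2\<rceil>) \<and>
           connected_on X (\<lambda>a b. E a b \<and> ((a \<in> A \<and> b \<in> B) \<or> (a \<in> B \<and> b \<in> A))) \<and>
           (\<forall>v \<in> V - X. (\<exists>u \<in> X. E v u) \<longrightarrow> (\<exists>a \<in> A. E v a) \<and> (\<exists>b \<in> B. E v b))"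
proof -
  have fin: "finite V" and sym: "\<And>a b. E a b \<Longrightarrow> E b a"
    using assms(1) unfolding simple_graph_def by auto
  have h: "1 \<le> (k + 1) div 2" using assms(5) by simp
  obtain X0 A0 B0 where "admissible V E S ((k + 1) div 2) X0 A0 B0"
    using exists_admissible[OF assms(1-3)] assms(4,5) by auto
  then obtain X A B where "admissible V E S ((k + 1) div 2) X A B"
    and "\<forall>v \<in> V - X. (\<exists>u \<in> X. E v u) \<longrightarrow> (\<exists>a \<in> A. E v a) \<and> (\<exists>b \<in> B. E v b)"
    using exists_admissible_dominating[of V E, OF fin sym h] by blast
  then have X: "X \<subseteq> V" "connected_on X E" "S \<subseteq> X" "A \<union> B = X" "A \<inter> B = {}"
    "connected_on X (\<lambda>a b. E a b \<and> ((a \<in> A \<and> b \<in> B) \<or> (a \<in> B \<and> b \<in> A)))"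
    and small: "\<And>C. connected_on C E \<Longrightarrow> C \<subseteq> A \<or> C \<subseteq> B \<Longrightarrow> card C \<le> (k + 1) div 2"
    unfolding admissible_def cross_edges_def by auto
  have "card C \<le> nat \<lceil>real k / 2\<rceil>" if "component_of A E C \<or> component_of B E C" for C
    using small that unfolding component_of_def nat_ceiling_half by blast
  with X \<open>\<forall>v \<in> V - X. _\<close> show ?thesis by blast
qed

end
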